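(* Let $X$ be a $T_1$ space and $\mathcal{P}$ an ideal of closed subsets of $X$. If the ring $C(X)_\mathcal{P}$ is isomorphic to the ring $C(Y)$ of all real-valued continuous functions on some topological space $Y$, then $C(X)_\mathcal{P}$ is closed under uniform limits, i.e. whenever a sequence $(f_n)$ in $C(X)_\mathcal{P}$ converges uniformly on $X$ to $f\in\mathbb{R}^X$, we have $f\in C(X)_\mathcal{P}$.
   Context: An ideal of closed subsets of $X$ is a family $\mathcal{P}$ of closed subsets of $X$ closed under finite unions and such that every closed subset of a member of $\mathcal{P}$ is in $\mathcal{P}$. For $f\in\mathbb{R}^X$, $D_f$ is the set of points of discontinuity of $f$, and $C(X)_\mathcal{P}=\{f\in\mathbb{R}^X\colon \overline{D_f}\in\mathcal{P}\}$ with pointwise operations. *)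

theory Defs
  imports "HOL-Analysis.Analysis"
begin

definition closed_ideal :: "'a topology \<Rightarrow> 'a set set \<Rightarrow> bool" where
  "closed_ideal X P \<longleftrightarrow>
     (\<forall>A\<in>P. closedin X A) \<and> {} \<in> P \<and>
     (\<forall>A\<in>P. \<forall>B\<in>P. A \<union> B \<in> P) \<and>
     (\<forall>A\<in>P. \<forall>B. closedin X B \<and> B \<subseteq> A \<longrightarrow> B \<in> P)"

definition realfuns :: "'a topology \<Rightarrow> ('a \<Rightarrow> real) set" where
  "realfuns X = extensional (topspace X)"

definition discont_set :: "'a topology \<Rightarrow> ('a \<Rightarrow> real) \<Rightarrow> 'a set" where
  "discont_set X f = {x \<in> topspace X. \<not> topcontinuous_at X euclideanreal f x}"

definition CP :: "'a topology \<Rightarrow> 'a set set \<Rightarrow> ('a \<Rightarrow> real) set" where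
  "CP X P = {f \<in> realfuns X. X closure_of (discont_set X f) \<in> P}"

definition Cont :: "'b topology \<Rightarrow> ('b \<Rightarrow> real) set" where
  "Cont Y = {g \<in> realfuns Y. continuous_map Y euclideanreal g}"

definition fun_ring_iso :: "(('a \<Rightarrow> real) \<Rightarrow> ('b \<Rightarrow> real)) \<Rightarrow> ('a \<Rightarrow> real) set \<Rightarrow> ('b \<Rightarrow> real) set \<Rightarrow> bool" where
  "fun_ring_iso \<phi> A B \<longleftrightarrow> bij_betw \<phi> A B \<and>
     (\<forall>f\<in>A. \<forall>g\<in>A. \<phi> (\<lambda>x. f x + g x) = (\<lambda>y. \<phi> f y + \<phi> g y) \<and>
                    \<phi> (\<lambda>x. f x * g x) = (\<lambda>y. \<phi> f y * \<phi> g y))"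

end

theory Submission
  imports Defs
begin

text \<open>Both \<open>C(X)\<^sub>\<P>\<close> and \<open>C(Y)\<close> are rings of real functions closed under composition
  with \<open>sqrt\<close>, so in each the nonnegative functions are exactly the squares. Hence the
  isomorphism (suitably normalised) preserves the order, fixes the constants and therefore preserves the
  sup-distance. A uniformly Cauchy sequence in \<open>C(X)\<^sub>\<P>\<close> is thus carried to a uniformly
  Cauchy sequence in \<open>C(Y)\<close>, whose uniform limit is continuous; its preimage is then the
  uniform limit of the original sequence, so it coincides with \<open>f\<close>.\<close>

lemma additive_mono_eq_id:
  fixes h :: "real \<Rightarrow> real"
  assumes add: "\<And>a b. h (a + b) = h a + h b" and "mono h" and "h 1 = 1"
  shows "h c = c"
proof -
  interpret additive h by unfold_locales (rule add)
  have h_nat: "h (of_nat n * a) = of_nat n * h a" for n a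
    by (induction n) (simp_all add: zero add distrib_right)
  have h_int: "h (of_int k) = of_int k" for k
  proof (cases "k \<ge> 0")
    case True
    then show ?thesis using h_nat[of "nat k" 1] assms(3) by simp
  next
    case False
    then show ?thesis using h_nat[of "nat (- k)" 1] assms(3) minus[of "of_int (- k)"] by simp
  qed
  have close: "\<bar>h c - c\<bar> \<le> 1 / real n" if "n > 0" for n :: nat
  proof -
    define k where "k = \<lfloor>real n * c\<rfloor>"
    have "of_int k \<le> real n * c" "real n * c \<le> of_int (k + 1)"
      unfolding k_def by linarith+
    then have "h (of_int k) \<le> h (real n * c)" "h (real n * c) \<le> h (of_int (k + 1))"
      using \<open>mono h\<close> by (auto dest: monoD)
    then have "of_int k \<le> real n * h c" "real n * h c \<le> of_int (k + 1)"
      by (simp_all only: h_int h_nat)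
    with \<open>of_int k \<le> real n * c\<close> \<open>real n * c \<le> of_int (k + 1)\<close>
    have "\<bar>real n * h c - real n * c\<bar> \<le> 1"
      by (simp add: abs_le_iff)
    moreover have "\<bar>real n * h c - real n * c\<bar> = real n * \<bar>h c - c\<bar>"
      by (simp add: abs_mult flip: right_diff_distrib)
    ultimately show ?thesis
      using that by (simp add: le_divide_eq mult.commute)
  qed
  show ?thesis
  proof (rule ccontr)
    assume "h c \<noteq> c"
    then have "\<bar>h c - c\<bar> > 0"
      by simp
    then obtain n :: nat where "n > 0" "inverse (real n) < \<bar>h c - c\<bar>"
      using ex_inverse_of_nat_less by blast
    with close[of n] show False
      by (simp add: inverse_eq_divide)
  qed
qed

lemma discont_set_eq: "discont_set X f = {x \<in> topspace X. \<not> (f \<longlongrightarrow> f x) (atin X x)}"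
  unfolding discont_set_def by (auto simp: topcontinuous_at_atin)

lemma tendsto_atin_restrict_iff:
  "((\<lambda>z\<in>topspace X. F z) \<longlongrightarrow> l) (atin X x) \<longleftrightarrow> (F \<longlongrightarrow> l) (atin X x)"
proof (rule tendsto_cong)
  show "\<forall>\<^sub>F z in atin X x. (\<lambda>z\<in>topspace X. F z) z = F z"
    by (auto simp: eventually_atin intro!: exI[of _ "topspace X"])
qed

lemma CP_restrict:
  assumes P: "closed_ideal X P" and f: "f \<in> CP X P" and g: "g \<in> CP X P"
    and F: "\<And>x. x \<in> topspace X \<Longrightarrow> (f \<longlongrightarrow> f x) (atin X x) \<Longrightarrow> (g \<longlongrightarrow> g x) (atin X x)
              \<Longrightarrow> (F \<longlongrightarrow> F x) (atin X x)"
  shows "(\<lambda>x\<in>topspace X. F x) \<in> CP X P"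
proof -
  have "discont_set X (\<lambda>x\<in>topspace X. F x) \<subseteq> discont_set X f \<union> discont_set X g"
    using F by (auto simp: discont_set_eq tendsto_atin_restrict_iff)
  then have "X closure_of discont_set X (\<lambda>x\<in>topspace X. F x)
               \<subseteq> X closure_of discont_set X f \<union> X closure_of discont_set X g"
    by (metis closure_of_mono closure_of_Un)
  moreover have "X closure_of discont_set X f \<union> X closure_of discont_set X g \<in> P"
    using P f g unfolding closed_ideal_def CP_def by blast
  ultimately have "X closure_of discont_set X (\<lambda>x\<in>topspace X. F x) \<in> P"
    using P unfolding closed_ideal_def by (meson closedin_closure_of)
  then show ?thesis
    by (simp add: CP_def realfuns_def)
qed

lemma CP_const: "closed_ideal X P \<Longrightarrow> (\<lambda>x\<in>topspace X. c) \<in> CP X P"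
  by (simp add: CP_def realfuns_def closed_ideal_def discont_set_eq tendsto_atin_restrict_iff)

lemma closed_ideal_trivial: "closed_ideal X {{}}"
  by (auto simp: closed_ideal_def)

lemma Cont_eq_CP_trivial: "Cont X = CP X {{}}"
  by (auto simp: Cont_def CP_def continuous_map_eq_topcontinuous_at discont_set_def
      closure_of_eq_empty)

lemma CP_le_iff_square:
  assumes P: "closed_ideal X P" and u: "u \<in> CP X P" and v: "v \<in> CP X P"
  shows "(\<forall>x\<in>topspace X. u x \<le> v x) \<longleftrightarrow> (\<exists>k\<in>CP X P. \<forall>x\<in>topspace X. v x = u x + (k x)\<^sup>2)"
proof
  assume le: "\<forall>x\<in>topspace X. u x \<le> v x"
  have "(\<lambda>x\<in>topspace X. sqrt (v x - u x)) \<in> CP X P"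
    by (rule CP_restrict[OF P u v]) (intro tendsto_real_sqrt tendsto_diff)
  moreover have "\<forall>x\<in>topspace X. v x = u x + ((\<lambda>x\<in>topspace X. sqrt (v x - u x)) x)\<^sup>2"
    using le by simp
  ultimately show "\<exists>k\<in>CP X P. \<forall>x\<in>topspace X. v x = u x + (k x)\<^sup>2"
    by blast
qed auto

lemma uniform_limit_iff_le:
  "uniform_limit S f l F \<longleftrightarrow> (\<forall>e>0. \<forall>\<^sub>F n in F. \<forall>x\<in>S. dist (f n x) (l x) \<le> e)"
  unfolding uniform_limit_iff
proof (intro iffI allI impI)
  fix e :: real
  assume "\<forall>e>0. \<forall>\<^sub>F n in F. \<forall>x\<in>S. dist (f n x) (l x) \<le> e" and "e > 0"
  then have "\<forall>\<^sub>F n in F. \<forall>x\<in>S. dist (f n x) (l x) \<le> e / 2"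
    by (meson half_gt_zero)
  then show "\<forall>\<^sub>F n in F. \<forall>x\<in>S. dist (f n x) (l x) < e"
    by eventually_elim (use \<open>e > 0\<close> in fastforce)
next
  fix e :: real
  assume "\<forall>e>0. \<forall>\<^sub>F n in F. \<forall>x\<in>S. dist (f n x) (l x) < e" and "e > 0"
  then have "\<forall>\<^sub>F n in F. \<forall>x\<in>S. dist (f n x) (l x) < e"
    by blast
  then show "\<forall>\<^sub>F n in F. \<forall>x\<in>S. dist (f n x) (l x) \<le> e"
    by eventually_elim auto
qed

lemma uniformly_Cauchy_on_iff_le:
  "uniformly_Cauchy_on S f \<longleftrightarrow> (\<forall>e>0. \<exists>M. \<forall>m\<ge>M. \<forall>n\<ge>M. \<forall>x\<in>S. dist (f m x) (f n x) \<le> e)"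
  unfolding uniformly_Cauchy_on_def
proof (intro iffI allI impI)
  fix e :: real
  assume "\<forall>e>0. \<exists>M. \<forall>m\<ge>M. \<forall>n\<ge>M. \<forall>x\<in>S. dist (f m x) (f n x) \<le> e" and "e > 0"
  then obtain M where "\<forall>m\<ge>M. \<forall>n\<ge>M. \<forall>x\<in>S. dist (f m x) (f n x) \<le> e / 2"
    by (meson half_gt_zero)
  then show "\<exists>M. \<forall>x\<in>S. \<forall>m\<ge>M. \<forall>n\<ge>M. dist (f m x) (f n x) < e"
    using \<open>e > 0\<close> by (smt (verit, best) field_sum_of_halves)
qed (meson less_imp_le)

locale CP_iso_Cont =
  fixes X :: "'a topology" and P :: "'a set set" and Y :: "'b topology"
    and \<phi> :: "('a \<Rightarrow> real) \<Rightarrow> ('b \<Rightarrow> real)"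
  assumes ideal: "closed_ideal X P" and iso: "fun_ring_iso \<phi> (CP X P) (Cont Y)"
begin

lemma bij_\<phi>: "bij_betw \<phi> (CP X P) (Cont Y)"
  using iso by (simp add: fun_ring_iso_def)

lemma \<phi>_Cont: "u \<in> CP X P \<Longrightarrow> \<phi> u \<in> Cont Y"
  using bij_\<phi> by (auto simp: bij_betw_def)

lemma \<phi>_surj: "g \<in> Cont Y \<Longrightarrow> \<exists>u\<in>CP X P. \<phi> u = g"
  using bij_\<phi> unfolding bij_betw_def by (metis imageE)

lemma Cont_const: "(\<lambda>y\<in>topspace Y. c) \<in> Cont Y"
  by (simp add: Cont_eq_CP_trivial CP_const closed_ideal_trivial)

text \<open>The pointwise sum and product in \<^const>\<open>fun_ring_iso\<close> are not extensional, so they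
  leave \<^term>\<open>CP X P\<close> and constrain \<open>\<phi>\<close> only up to the values of \<open>\<phi>\<close> at the
  constants \<open>0\<close> and \<open>1\<close>. In particular \<open>\<phi>\<close> need not preserve \<open>1\<close>; dividing by
  its image gives the genuine isomorphism \<open>\<psi>\<close> below.\<close>

lemma \<phi>_add:
  assumes u: "u \<in> CP X P" and v: "v \<in> CP X P"
  shows "\<phi> u y + \<phi> v y = \<phi> (\<lambda>x\<in>topspace X. u x + v x) y + \<phi> (\<lambda>x\<in>topspace X. 0) y"
proof -
  have "(\<lambda>x. u x + v x) = (\<lambda>x. (\<lambda>x\<in>topspace X. u x + v x) x + (\<lambda>x\<in>topspace X. 0) x)"
    using u v by (auto simp: CP_def realfuns_def extensional_def)
  moreover have "(\<lambda>x\<in>topspace X. u x + v x) \<in> CP X P"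
    by (rule CP_restrict[OF ideal u v]) (intro tendsto_add)
  ultimately show ?thesis
    using iso u v CP_const[OF ideal] unfolding fun_ring_iso_def by metis
qed

lemma \<phi>_mult:
  assumes u: "u \<in> CP X P" and v: "v \<in> CP X P"
  shows "\<phi> u y * \<phi> v y = \<phi> (\<lambda>x\<in>topspace X. u x * v x) y * \<phi> (\<lambda>x\<in>topspace X. 1) y"
proof -
  have "(\<lambda>x. u x * v x) = (\<lambda>x. (\<lambda>x\<in>topspace X. u x * v x) x * (\<lambda>x\<in>topspace X. 1) x)"
    using u v by (auto simp: CP_def realfuns_def extensional_def)
  moreover have "(\<lambda>x\<in>topspace X. u x * v x) \<in> CP X P"
    by (rule CP_restrict[OF ideal u v]) (intro tendsto_mult)
  ultimately show ?thesis
    using iso u v CP_const[OF ideal] unfolding fun_ring_iso_def by metis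
qed

lemma \<phi>_zero:
  assumes y: "y \<in> topspace Y"
  shows "\<phi> (\<lambda>x\<in>topspace X. 0) y = 0"
proof -
  obtain v0 where v0: "v0 \<in> CP X P" "\<phi> v0 = (\<lambda>y\<in>topspace Y. 0)"
    using \<phi>_surj[OF Cont_const] by blast
  obtain v1 where v1: "v1 \<in> CP X P" "\<phi> v1 = (\<lambda>y\<in>topspace Y. 1)"
    using \<phi>_surj[OF Cont_const] by blast
  have eq: "\<phi> (\<lambda>x\<in>topspace X. 0) y * \<phi> v y =
      \<phi> (\<lambda>x\<in>topspace X. 0) y * \<phi> (\<lambda>x\<in>topspace X. 1) y" if "v \<in> CP X P" for v
    using \<phi>_mult[OF CP_const[OF ideal] that] by (simp cong: restrict_cong)
  show ?thesis
    using eq[OF v0(1)] eq[OF v1(1)] v0(2) v1(2) y by auto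
qed

lemma \<phi>_one_nonzero:
  assumes y: "y \<in> topspace Y"
  shows "\<phi> (\<lambda>x\<in>topspace X. 1) y \<noteq> 0"
proof -
  obtain v where v: "v \<in> CP X P" "\<phi> v = (\<lambda>y\<in>topspace Y. 1)"
    using \<phi>_surj[OF Cont_const] by blast
  then show ?thesis
    using \<phi>_mult[OF v(1) v(1), of y] y by auto
qed

definition \<psi> :: "('a \<Rightarrow> real) \<Rightarrow> ('b \<Rightarrow> real)" where
  "\<psi> u = (\<lambda>y\<in>topspace Y. \<phi> u y / \<phi> (\<lambda>x\<in>topspace X. 1) y)"

lemma \<psi>_add:
  assumes "u \<in> CP X P" "v \<in> CP X P" "y \<in> topspace Y"
  shows "\<psi> (\<lambda>x\<in>topspace X. u x + v x) y = \<psi> u y + \<psi> v y"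
  using \<phi>_add[OF assms(1,2), of y] \<phi>_zero \<phi>_one_nonzero assms(3)
  by (simp add: \<psi>_def flip: add_divide_distrib)

lemma \<psi>_mult:
  assumes "u \<in> CP X P" "v \<in> CP X P" "y \<in> topspace Y"
  shows "\<psi> (\<lambda>x\<in>topspace X. u x * v x) y = \<psi> u y * \<psi> v y"
  using \<phi>_mult[OF assms(1,2), of y] \<phi>_one_nonzero[OF assms(3)] assms(3)
  by (simp add: \<psi>_def field_simps)

lemma \<psi>_one: "y \<in> topspace Y \<Longrightarrow> \<psi> (\<lambda>x\<in>topspace X. 1) y = 1"
  using \<phi>_one_nonzero by (simp add: \<psi>_def)

lemma \<psi>_Cont:
  assumes u: "u \<in> CP X P"
  shows "\<psi> u \<in> Cont Y"
proof -
  have "continuous_map Y euclideanreal (\<phi> u)"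
    and "continuous_map Y euclideanreal (\<phi> (\<lambda>x\<in>topspace X. 1))"
    using \<phi>_Cont[OF u] \<phi>_Cont[OF CP_const[OF ideal]] by (simp_all add: Cont_def)
  then have "continuous_map Y euclideanreal (\<lambda>y. \<phi> u y / \<phi> (\<lambda>x\<in>topspace X. 1) y)"
    using \<phi>_one_nonzero by (simp add: continuous_map_real_divide)
  then show ?thesis
    by (auto simp: Cont_def realfuns_def \<psi>_def elim: continuous_map_eq)
qed

lemma bij_\<psi>: "bij_betw \<psi> (CP X P) (Cont Y)"
proof -
  have "inj_on \<psi> (CP X P)"
  proof (rule inj_onI)
    fix u v assume u: "u \<in> CP X P" and v: "v \<in> CP X P" and eq: "\<psi> u = \<psi> v"
    have "\<phi> u = \<phi> v"
    proof (rule extensionalityI[of _ "topspace Y"])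
      show "\<phi> u \<in> extensional (topspace Y)" "\<phi> v \<in> extensional (topspace Y)"
        using \<phi>_Cont[OF u] \<phi>_Cont[OF v] by (simp_all add: Cont_def realfuns_def)
    next
      fix y assume "y \<in> topspace Y"
      then show "\<phi> u y = \<phi> v y"
        using fun_cong[OF eq, of y] \<phi>_one_nonzero by (simp add: \<psi>_def)
    qed
    then show "u = v"
      using bij_\<phi> u v by (auto simp: bij_betw_def dest: inj_onD)
  qed
  moreover have "g \<in> \<psi> ` CP X P" if g: "g \<in> Cont Y" for g
  proof -
    have "(\<lambda>y\<in>topspace Y. g y * \<phi> (\<lambda>x\<in>topspace X. 1) y) \<in> Cont Y"
      using g \<phi>_Cont[OF CP_const[OF ideal]]
      by (auto simp: Cont_def realfuns_def intro: continuous_map_real_mult continuous_map_eq)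
    then obtain u where u: "u \<in> CP X P"
      and "\<phi> u = (\<lambda>y\<in>topspace Y. g y * \<phi> (\<lambda>x\<in>topspace X. 1) y)"
      using \<phi>_surj by blast
    have "\<psi> u = g"
      using g \<open>\<phi> u = _\<close> \<phi>_one_nonzero
      by (intro extensionalityI[of _ "topspace Y"]) (auto simp: \<psi>_def Cont_def realfuns_def)
    then show ?thesis
      using u by blast
  qed
  moreover have "\<psi> ` CP X P \<subseteq> Cont Y"
    using \<psi>_Cont by blast
  ultimately show ?thesis
    unfolding bij_betw_def by blast
qed

lemma \<psi>_eq_add_square_iff:
  assumes u: "u \<in> CP X P" and v: "v \<in> CP X P" and k: "k \<in> CP X P"
  shows "(\<forall>x\<in>topspace X. v x = u x + (k x)\<^sup>2) \<longleftrightarrow>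
         (\<forall>y\<in>topspace Y. \<psi> v y = \<psi> u y + (\<psi> k y)\<^sup>2)"
proof -
  define k2 where "k2 = (\<lambda>x\<in>topspace X. k x * k x)"
  define w where "w = (\<lambda>x\<in>topspace X. u x + k2 x)"
  have k2: "k2 \<in> CP X P"
    unfolding k2_def by (rule CP_restrict[OF ideal k k]) (intro tendsto_mult)
  have w: "w \<in> CP X P"
    unfolding w_def by (rule CP_restrict[OF ideal u k2]) (intro tendsto_add)
  have ext_X: "f \<in> extensional (topspace X)" if "f \<in> CP X P" for f
    using that by (simp add: CP_def realfuns_def)
  have ext_Y: "\<psi> f \<in> extensional (topspace Y)" if "f \<in> CP X P" for f
    using \<psi>_Cont[OF that] by (simp add: Cont_def realfuns_def)
  have "(\<forall>x\<in>topspace X. v x = u x + (k x)\<^sup>2) \<longleftrightarrow> (\<forall>x\<in>topspace X. v x = w x)"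
    by (simp add: w_def k2_def power2_eq_square)
  also have "\<dots> \<longleftrightarrow> v = w"
    using extensionalityI[OF ext_X[OF v] ext_X[OF w]] by auto
  also have "\<dots> \<longleftrightarrow> \<psi> v = \<psi> w"
    using bij_\<psi> v w by (auto simp: bij_betw_def dest: inj_onD)
  also have "\<dots> \<longleftrightarrow> (\<forall>y\<in>topspace Y. \<psi> v y = \<psi> w y)"
    by (auto intro: extensionalityI[OF ext_Y[OF v] ext_Y[OF w]])
  also have "\<dots> \<longleftrightarrow> (\<forall>y\<in>topspace Y. \<psi> v y = \<psi> u y + (\<psi> k y)\<^sup>2)"
    using \<psi>_add[OF u k2] \<psi>_mult[OF k k] by (simp add: w_def k2_def power2_eq_square)
  finally show ?thesis .
qed

lemma \<psi>_le_iff: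
  assumes u: "u \<in> CP X P" and v: "v \<in> CP X P"
  shows "(\<forall>x\<in>topspace X. u x \<le> v x) \<longleftrightarrow> (\<forall>y\<in>topspace Y. \<psi> u y \<le> \<psi> v y)"
proof -
  have "(\<forall>x\<in>topspace X. u x \<le> v x) \<longleftrightarrow>
        (\<exists>k\<in>CP X P. \<forall>y\<in>topspace Y. \<psi> v y = \<psi> u y + (\<psi> k y)\<^sup>2)"
    using CP_le_iff_square[OF ideal u v] \<psi>_eq_add_square_iff[OF u v] by blast
  also have "\<dots> \<longleftrightarrow> (\<exists>g\<in>Cont Y. \<forall>y\<in>topspace Y. \<psi> v y = \<psi> u y + (g y)\<^sup>2)"
    unfolding bij_betw_imp_surj_on[OF bij_\<psi>, symmetric] by blast
  also have "\<dots> \<longleftrightarrow> (\<forall>y\<in>topspace Y. \<psi> u y \<le> \<psi> v y)"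
    using CP_le_iff_square[OF closed_ideal_trivial, of "\<psi> u" Y "\<psi> v"]
      \<psi>_Cont[OF u] \<psi>_Cont[OF v]
    by (simp add: Cont_eq_CP_trivial)
  finally show ?thesis .
qed

lemma \<psi>_const:
  assumes y: "y \<in> topspace Y"
  shows "\<psi> (\<lambda>x\<in>topspace X. c) y = c"
proof (rule additive_mono_eq_id)
  show "\<psi> (\<lambda>x\<in>topspace X. a + b) y = \<psi> (\<lambda>x\<in>topspace X. a) y + \<psi> (\<lambda>x\<in>topspace X. b) y" for a b
    using \<psi>_add[OF CP_const[OF ideal] CP_const[OF ideal] y] by (simp cong: restrict_cong)
  show "mono (\<lambda>c. \<psi> (\<lambda>x\<in>topspace X. c) y)"
  proof (rule monoI)
    fix a b :: real
    assume "a \<le> b"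
    then show "\<psi> (\<lambda>x\<in>topspace X. a) y \<le> \<psi> (\<lambda>x\<in>topspace X. b) y"
      using \<psi>_le_iff[OF CP_const[OF ideal] CP_const[OF ideal], of a b] y by simp
  qed
  show "\<psi> (\<lambda>x\<in>topspace X. 1) y = 1"
    using \<psi>_one[OF y] .
qed

lemma \<psi>_dist_le_iff:
  assumes u: "u \<in> CP X P" and v: "v \<in> CP X P"
  shows "(\<forall>x\<in>topspace X. dist (u x) (v x) \<le> e) \<longleftrightarrow>
         (\<forall>y\<in>topspace Y. dist (\<psi> u y) (\<psi> v y) \<le> e)"
proof -
  have shift: "(\<forall>x\<in>topspace X. f x \<le> g x + e) \<longleftrightarrow> (\<forall>y\<in>topspace Y. \<psi> f y \<le> \<psi> g y + e)"
    if f: "f \<in> CP X P" and g: "g \<in> CP X P" for f g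
  proof -
    have ge: "(\<lambda>x\<in>topspace X. g x + (\<lambda>x\<in>topspace X. e) x) \<in> CP X P"
      by (rule CP_restrict[OF ideal g CP_const[OF ideal]]) (intro tendsto_add)
    show ?thesis
      using \<psi>_le_iff[OF f ge] \<psi>_add[OF g CP_const[OF ideal]] \<psi>_const by simp
  qed
  show ?thesis
    using shift[OF u v] shift[OF v u] by (auto simp: dist_real_def abs_le_iff)
qed

lemma uniform_limit_\<psi>_iff:
  assumes "\<And>n. fs n \<in> CP X P" and "h \<in> CP X P"
  shows "uniform_limit (topspace X) fs h F \<longleftrightarrow>
         uniform_limit (topspace Y) (\<lambda>n. \<psi> (fs n)) (\<psi> h) F"
  using assms by (simp add: uniform_limit_iff_le \<psi>_dist_le_iff)

lemma uniformly_Cauchy_on_\<psi>_iff: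
  assumes "\<And>n. fs n \<in> CP X P"
  shows "uniformly_Cauchy_on (topspace X) fs \<longleftrightarrow>
         uniformly_Cauchy_on (topspace Y) (\<lambda>n. \<psi> (fs n))"
  using assms by (simp add: uniformly_Cauchy_on_iff_le \<psi>_dist_le_iff)

lemma uniform_limit_in_CP:
  assumes fs: "\<And>n. fs n \<in> CP X P" and f: "f \<in> realfuns X"
    and lim: "uniform_limit (topspace X) fs f sequentially"
  shows "f \<in> CP X P"
proof -
  have "uniformly_Cauchy_on (topspace X) fs"
    using lim uniformly_convergent_Cauchy uniformly_convergent_on_def by blast
  then have "uniformly_Cauchy_on (topspace Y) (\<lambda>n. \<psi> (fs n))"
    using uniformly_Cauchy_on_\<psi>_iff[of fs] fs by blast
  then obtain g where g: "uniform_limit (topspace Y) (\<lambda>n. \<psi> (fs n)) g sequentially"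
    unfolding uniformly_convergent_eq_Cauchy[symmetric] uniformly_convergent_on_def by blast
  have "continuous_map Y euclideanreal g"
    using Met_TC.continuous_map_uniform_limit_alt[where F=sequentially and X=Y and f="\<lambda>n. \<psi> (fs n)"]
      \<psi>_Cont[OF fs] g
    by (simp add: Cont_def uniform_limit_iff)
  then have "(\<lambda>y\<in>topspace Y. g y) \<in> Cont Y"
    by (auto simp: Cont_def realfuns_def elim: continuous_map_eq)
  then obtain h where h: "h \<in> CP X P" "\<psi> h = (\<lambda>y\<in>topspace Y. g y)"
    using bij_\<psi> unfolding bij_betw_def by (metis imageE)
  have "uniform_limit (topspace Y) (\<lambda>n. \<psi> (fs n)) (\<psi> h) sequentially"
    using g by (subst uniform_limit_cong[where i=g]) (simp_all add: h(2))
  then have lim_h: "uniform_limit (topspace X) fs h sequentially"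
    using uniform_limit_\<psi>_iff[of fs h] fs h(1) by blast
  have "f = h"
  proof (rule extensionalityI)
    show "f \<in> extensional (topspace X)" "h \<in> extensional (topspace X)"
      using f h(1) by (simp_all add: CP_def realfuns_def)
  next
    fix x assume "x \<in> topspace X"
    then show "f x = h x"
      using LIMSEQ_unique tendsto_uniform_limitI lim lim_h by metis
  qed
  then show ?thesis
    using h(1) by simp
qed

end

theorem theorem3p3:
  fixes X :: "'a topology" and P :: "'a set set" and Y :: "'b topology"
    and \<phi> :: "('a \<Rightarrow> real) \<Rightarrow> ('b \<Rightarrow> real)"
  assumes "t1_space X"
    and "closed_ideal X P"
    and "fun_ring_iso \<phi> (CP X P) (Cont Y)"
    and "\<And>n. fs n \<in> CP X P"
    and "f \<in> realfuns X"
    and "uniform_limit (topspace X) fs f sequentially"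
  shows "f \<in> CP X P"
proof -
  interpret CP_iso_Cont X P Y \<phi>
    using assms(2,3) by unfold_locales
  show ?thesis
    using uniform_limit_in_CP assms(4-6) by blast
qed

end
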